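(* Every theorem of the proof system $\mathbf{P}$ is valid, i.e. its interpretation equals $\Omega$ in every belief model for $G$. In particular, for positive optimality conditions $\phi_i$ and every formula $\chi$, $[\![\mathit{rat}_\phi]\!]\cap[\![\Box\chi]\!]\subseteq[\![O_\phi\chi]\!]$.
   Context: Strategic game $G=(T_1,\dots,T_n,<_1,\dots,<_n)$, $\ge_i$ reflexive closure of $<_i$ on $T=\prod_iT_i$. Optimality condition for $i$: closed first-order formula over atoms $C(a)$, $a\ge^i_cb$, constant $o$; in $(G,G',s)$ with $o\mapsto s$: $C(x)$ iff $\alpha(x)_j\in G'_j$ for all $j$, $x\ge^i_zy$ iff $(\alpha(x)_i,\alpha(z)_{-i})\ge_i(\alpha(y)_i,\alpha(z)_{-i})$; positive if all $C(\cdot)$ under an even number of negations. Belief model $(\Omega,\bar s_1,\dots,\bar s_n,P_1,\dots,P_n)$, $(G_E)_i=\{\bar s_i(u):u\in E\}$. $\mathcal{L}_\nu$: $\psi::=\mathit{rat}_{\phi_i}\mid X\mid\psi\wedge\psi\mid\neg\psi\mid\Box_i\psi\mid O_{\phi_i}\psi\mid\nu X.\psi$ ($\nu$-free body), with $[\![\mathit{rat}_{\phi_i}]\!]_E=\{\omega:(G,G_{P_i(\omega)},\bar s(\omega))\models\phi_i\}$, $[\![X]\!]_E=E$, $[\![\Box_i\psi]\!]_E=\{\omega:P_i(\omega)\subseteq[\![\psi]\!]_E\}$, $[\![O_{\phi_i}\psi]\!]_E=\{\omega:(G,G_{[\![\psi]\!]_E},\bar s(\omega))\models\phi_i\}$,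 $[\![\nu X.\psi]\!]_E$ the transfinite-iteration outcome from $\Omega$ of $F\mapsto[\![\psi]\!]_F\cap F$. $\mathit{rat}_\phi,\Box,O_\phi$ are conjunctions over all players. Positive in $X$: $X$ under even negations and inside $O_{\phi_i}$ only for positive $\phi_i$. Proof system $\mathbf{P}$: propositional tautologies and modus ponens; axiom $\mathit{rat}_\phi\to(\Box\chi\to O_\phi\chi)$; axiom $\nu X.\psi\to\psi[X\mapsto\nu X.\psi]$; rule from $\chi\to\psi[X\mapsto\chi]$ infer $\chi\to\nu X.\psi$; in all of these all optimality conditions are positive and $\psi$ is positive in $X$. A formula is valid if $[\![\cdot]\!]_E=\Omega$ for all belief models and all $E\subseteq\Omega$. *)

theory Defs
  imports Main "HOL-Library.FuncSet"
begin

text \<open>Players are 0,...,n-1. A strategy profile is an (extensional) function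
  nat => 's; T = prod_i T_i is the set of profiles PiE {..<n} (strat G).
  lt G i is player i's strict preference <_i on profiles; x >=_i y is the
  reflexive closure: y <_i x or x = y.\<close>

record 's game =
  nplayers :: nat
  strat :: "nat \<Rightarrow> 's set"
  lt :: "nat \<Rightarrow> (nat \<Rightarrow> 's) \<Rightarrow> (nat \<Rightarrow> 's) \<Rightarrow> bool"

definition profiles :: "'s game \<Rightarrow> (nat \<Rightarrow> 's) set" where
  "profiles G = PiE {..<nplayers G} (strat G)"

definition geq :: "'s game \<Rightarrow> nat \<Rightarrow> (nat \<Rightarrow> 's) \<Rightarrow> (nat \<Rightarrow> 's) \<Rightarrow> bool" where
  "geq G i x y \<longleftrightarrow> lt G i y x \<or> x = y"

datatype otrm = OVar nat | OConst

datatype oform =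
    OC otrm
  | OGe otrm otrm otrm           \<comment> \<open>OGe a c b  is  a >=^i_c b\<close>
  | ONeg oform
  | OConj oform oform
  | OEx nat oform

fun tfv :: "otrm \<Rightarrow> nat set" where
  "tfv (OVar k) = {k}"
| "tfv OConst = {}"

fun ofv :: "oform \<Rightarrow> nat set" where
  "ofv (OC a) = tfv a"
| "ofv (OGe a c b) = tfv a \<union> tfv c \<union> tfv b"
| "ofv (ONeg p) = ofv p"
| "ofv (OConj p q) = ofv p \<union> ofv q"
| "ofv (OEx k p) = ofv p - {k}"

definition oclosed :: "oform \<Rightarrow> bool" where
  "oclosed p \<longleftrightarrow> ofv p = {}"

fun opos :: "bool \<Rightarrow> oform \<Rightarrow> bool" where
  "opos b (OC a) = b"
| "opos b (OGe a c d) = True"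
| "opos b (ONeg p) = opos (\<not> b) p"
| "opos b (OConj p q) = (opos b p \<and> opos b q)"
| "opos b (OEx k p) = opos b p"

definition opositive :: "oform \<Rightarrow> bool" where
  "opositive p \<longleftrightarrow> opos True p"

fun tval :: "(nat \<Rightarrow> (nat \<Rightarrow> 's)) \<Rightarrow> (nat \<Rightarrow> 's) \<Rightarrow> otrm \<Rightarrow> (nat \<Rightarrow> 's)" where
  "tval \<alpha> s (OVar k) = \<alpha> k"
| "tval \<alpha> s OConst = s"

fun osat :: "'s game \<Rightarrow> nat \<Rightarrow> (nat \<Rightarrow> 's set) \<Rightarrow> (nat \<Rightarrow> 's)
              \<Rightarrow> (nat \<Rightarrow> (nat \<Rightarrow> 's)) \<Rightarrow> oform \<Rightarrow> bool" where
  "osat G i G' s \<alpha> (OC a) = (\<forall>j<nplayers G. tval \<alpha> s a j \<in> G' j)"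
| "osat G i G' s \<alpha> (OGe a c b) =
     geq G i ((tval \<alpha> s c)(i := tval \<alpha> s a i)) ((tval \<alpha> s c)(i := tval \<alpha> s b i))"
| "osat G i G' s \<alpha> (ONeg p) = (\<not> osat G i G' s \<alpha> p)"
| "osat G i G' s \<alpha> (OConj p q) = (osat G i G' s \<alpha> p \<and> osat G i G' s \<alpha> q)"
| "osat G i G' s \<alpha> (OEx k p) = (\<exists>x\<in>profiles G. osat G i G' s (\<alpha>(k := x)) p)"

text \<open>(G, G', s) |= phi for a closed phi (assignment irrelevant).\<close>
definition oholds :: "'s game \<Rightarrow> nat \<Rightarrow> (nat \<Rightarrow> 's set) \<Rightarrow> (nat \<Rightarrow> 's) \<Rightarrow> oform \<Rightarrow> bool" where
  "oholds G i G' s p = osat G i G' s (\<lambda>_. s) p"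

text \<open>Omega is the universe of type 'w; sb i is s-bar_i, poss i is P_i.\<close>
record ('w, 's) bmodel =
  sb :: "nat \<Rightarrow> 'w \<Rightarrow> 's"
  poss :: "nat \<Rightarrow> 'w \<Rightarrow> 'w set"

definition belief_model :: "'s game \<Rightarrow> ('w, 's) bmodel \<Rightarrow> bool" where
  "belief_model G M \<longleftrightarrow> (\<forall>i<nplayers G. \<forall>\<omega>. sb M i \<omega> \<in> strat G i)"

definition restrG :: "('w, 's) bmodel \<Rightarrow> 'w set \<Rightarrow> nat \<Rightarrow> 's set" where
  "restrG M E = (\<lambda>j. sb M j ` E)"

definition sbar :: "'s game \<Rightarrow> ('w, 's) bmodel \<Rightarrow> 'w \<Rightarrow> (nat \<Rightarrow> 's)" where
  "sbar G M \<omega> = restrict (\<lambda>j. sb M j \<omega>) {..<nplayers G}"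

text \<open>The iterates of h from the top element: the least family containing
  Omega (= Inter {}), closed under h and under intersections (limit stages).
  For a deflationary h these are exactly the transfinite iterates
  X_0 = Omega, X_(a+1) = h X_a, X_lam = Inter_(b<lam) X_b, and the outcome
  of the iteration is their intersection.\<close>
inductive_set iterates_top :: "('w set \<Rightarrow> 'w set) \<Rightarrow> 'w set set" for h where
  step: "F \<in> iterates_top h \<Longrightarrow> h F \<in> iterates_top h"
| inter: "(\<And>F. F \<in> M \<Longrightarrow> F \<in> iterates_top h) \<Longrightarrow> \<Inter> M \<in> iterates_top h"

definition iter_outcome :: "('w set \<Rightarrow> 'w set) \<Rightarrow> 'w set" where
  "iter_outcome h = \<Inter> (iterates_top h)"

datatype lform =
    Rat nat oform
  | X
  | LAnd lform lform
  | LNot lform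
  | Bx nat lform
  | Opt nat oform lform
  | Nu lform

fun sem :: "'s game \<Rightarrow> ('w, 's) bmodel \<Rightarrow> lform \<Rightarrow> 'w set \<Rightarrow> 'w set" where
  "sem G M (Rat i p) E = {\<omega>. oholds G i (restrG M (poss M i \<omega>)) (sbar G M \<omega>) p}"
| "sem G M X E = E"
| "sem G M (LAnd a b) E = sem G M a E \<inter> sem G M b E"
| "sem G M (LNot a) E = - sem G M a E"
| "sem G M (Bx i a) E = {\<omega>. poss M i \<omega> \<subseteq> sem G M a E}"
| "sem G M (Opt i p a) E = {\<omega>. oholds G i (restrG M (sem G M a E)) (sbar G M \<omega>) p}"
| "sem G M (Nu a) E = iter_outcome (\<lambda>F. sem G M a F \<inter> F)"

definition LImp :: "lform \<Rightarrow> lform \<Rightarrow> lform" where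
  "LImp a b = LNot (LAnd a (LNot b))"

definition LTrue :: lform where
  "LTrue = LNot (LAnd X (LNot X))"

definition bigAnd :: "lform list \<Rightarrow> lform" where
  "bigAnd xs = foldr LAnd xs LTrue"

definition ratAll :: "nat \<Rightarrow> (nat \<Rightarrow> oform) \<Rightarrow> lform" where
  "ratAll n \<phi> = bigAnd (map (\<lambda>i. Rat i (\<phi> i)) [0..<n])"

definition BoxAll :: "nat \<Rightarrow> lform \<Rightarrow> lform" where
  "BoxAll n a = bigAnd (map (\<lambda>i. Bx i a) [0..<n])"

definition OptAll :: "nat \<Rightarrow> (nat \<Rightarrow> oform) \<Rightarrow> lform \<Rightarrow> lform" where
  "OptAll n \<phi> a = bigAnd (map (\<lambda>i. Opt i (\<phi> i) a) [0..<n])"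

fun nufree :: "lform \<Rightarrow> bool" where
  "nufree (Rat i p) = True"
| "nufree X = True"
| "nufree (LAnd a b) = (nufree a \<and> nufree b)"
| "nufree (LNot a) = nufree a"
| "nufree (Bx i a) = nufree a"
| "nufree (Opt i p a) = nufree a"
| "nufree (Nu a) = False"

fun wf :: "nat \<Rightarrow> lform \<Rightarrow> bool" where
  "wf n (Rat i p) = (i < n \<and> oclosed p)"
| "wf n X = True"
| "wf n (LAnd a b) = (wf n a \<and> wf n b)"
| "wf n (LNot a) = wf n a"
| "wf n (Bx i a) = (i < n \<and> wf n a)"
| "wf n (Opt i p a) = (i < n \<and> oclosed p \<and> wf n a)"
| "wf n (Nu a) = (nufree a \<and> wf n a)"

fun allpos :: "lform \<Rightarrow> bool" where
  "allpos (Rat i p) = opositive p"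
| "allpos X = True"
| "allpos (LAnd a b) = (allpos a \<and> allpos b)"
| "allpos (LNot a) = allpos a"
| "allpos (Bx i a) = allpos a"
| "allpos (Opt i p a) = (opositive p \<and> allpos a)"
| "allpos (Nu a) = allpos a"

definition good :: "nat \<Rightarrow> lform \<Rightarrow> bool" where
  "good n a \<longleftrightarrow> wf n a \<and> allpos a"

fun occX :: "lform \<Rightarrow> bool" where
  "occX (Rat i p) = False"
| "occX X = True"
| "occX (LAnd a b) = (occX a \<or> occX b)"
| "occX (LNot a) = occX a"
| "occX (Bx i a) = occX a"
| "occX (Opt i p a) = occX a"
| "occX (Nu a) = False"   \<comment> \<open>X is bound by nu\<close>

fun posX :: "bool \<Rightarrow> lform \<Rightarrow> bool" where
  "posX b (Rat i p) = True"
| "posX b X = b"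
| "posX b (LAnd c d) = (posX b c \<and> posX b d)"
| "posX b (LNot c) = posX (\<not> b) c"
| "posX b (Bx i c) = posX b c"
| "posX b (Opt i p c) = ((occX c \<longrightarrow> opositive p) \<and> posX b c)"
| "posX b (Nu c) = True"

definition positiveX :: "lform \<Rightarrow> bool" where
  "positiveX a \<longleftrightarrow> posX True a"

fun substX :: "lform \<Rightarrow> lform \<Rightarrow> lform" where
  "substX (Rat i p) c = Rat i p"
| "substX X c = c"
| "substX (LAnd a b) c = LAnd (substX a c) (substX b c)"
| "substX (LNot a) c = LNot (substX a c)"
| "substX (Bx i a) c = Bx i (substX a c)"
| "substX (Opt i p a) c = Opt i p (substX a c)"
| "substX (Nu a) c = Nu a"

text \<open>Propositional tautologies: formulas true under every valuation of
  their maximal non-propositional subformulas (propositional atoms).\<close>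
fun pval :: "(lform \<Rightarrow> bool) \<Rightarrow> lform \<Rightarrow> bool" where
  "pval v (LAnd a b) = (pval v a \<and> pval v b)"
| "pval v (LNot a) = (\<not> pval v a)"
| "pval v a = v a"

definition ptaut :: "lform \<Rightarrow> bool" where
  "ptaut a \<longleftrightarrow> (\<forall>v. pval v a)"

inductive prov :: "nat \<Rightarrow> lform \<Rightarrow> bool" for n where
  taut: "\<lbrakk> ptaut a; good n a \<rbrakk> \<Longrightarrow> prov n a"
| mp: "\<lbrakk> prov n (LImp a b); prov n a; good n b \<rbrakk> \<Longrightarrow> prov n b"
| ax_rat: "\<lbrakk> \<forall>i<n. oclosed (\<phi> i) \<and> opositive (\<phi> i); good n c \<rbrakk>
     \<Longrightarrow> prov n (LImp (ratAll n \<phi>) (LImp (BoxAll n c) (OptAll n \<phi> c)))"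
| ax_nu: "\<lbrakk> good n (Nu a); positiveX a \<rbrakk> \<Longrightarrow> prov n (LImp (Nu a) (substX a (Nu a)))"
| rule_nu: "\<lbrakk> prov n (LImp c (substX a c)); good n c; good n (Nu a); positiveX a \<rbrakk>
     \<Longrightarrow> prov n (LImp c (Nu a))"

end

theory Submission
  imports Defs
begin

text \<open>The only non-propositional ingredients are
  monotonicity facts: a positive optimality condition is preserved when the restricted
  game grows, so by induction on a body positive in X its semantics is monotone in the
  interpretation of X. The outcome of the iteration is then a post-fixed point of
  F \<mapsto> [psi]_F \<inter> F (giving the unfolding axiom) and contains every post-fixed point of
  [psi] (giving the induction rule), while the rationality axiom is monotonicity of
  phi_i along P_i(\<omega>) \<subseteq> [chi].\<close>

lemma osat_mono:
  assumes "opos b p" and "G1 \<le> G2"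
  shows "if b then osat G i G1 s \<alpha> p \<longrightarrow> osat G i G2 s \<alpha> p
              else osat G i G2 s \<alpha> p \<longrightarrow> osat G i G1 s \<alpha> p"
  using assms
proof (induction p arbitrary: b \<alpha>)
  case (OC a)
  then show ?case by (auto simp: le_fun_def)
next
  case (OEx k p)
  then show ?case by (cases b) (auto, metis+)
qed (fastforce split: if_splits)+

lemma oholds_mono:
  "opositive p \<Longrightarrow> G1 \<le> G2 \<Longrightarrow> oholds G i G1 s p \<Longrightarrow> oholds G i G2 s p"
  using osat_mono[of True p G1 G2] by (simp add: opositive_def oholds_def)

lemma restrG_mono: "A \<subseteq> B \<Longrightarrow> restrG M A \<le> restrG M B"
  by (auto simp: restrG_def le_fun_def)

lemma sem_indep_X: "\<not> occX a \<Longrightarrow> sem G M a E = sem G M a F"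
  by (induction a) auto

lemma sem_substX: "sem G M (substX a c) E = sem G M a (sem G M c E)"
  by (induction a) auto

lemma sem_mono_X:
  assumes "posX b a" and "E \<subseteq> F"
  shows "if b then sem G M a E \<subseteq> sem G M a F else sem G M a F \<subseteq> sem G M a E"
  using assms(1)
proof (induction a arbitrary: b)
  case (Opt i p a)
  show ?case
  proof (cases "occX a")
    case True
    with Opt.prems have "opositive p" by simp
    with Opt.IH[of b] Opt.prems show ?thesis
      by (cases b) (auto intro: oholds_mono restrG_mono)
  next
    case False
    then show ?thesis by (simp add: sem_indep_X[of a G M E F])
  qed
qed (use assms(2) in \<open>fastforce split: if_splits\<close>)+

lemma sem_mono_positiveX: "positiveX a \<Longrightarrow> E \<subseteq> F \<Longrightarrow> sem G M a E \<subseteq> sem G M a F"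
  using sem_mono_X[of True a] by (simp add: positiveX_def)

lemma iter_outcome_in_iterates: "iter_outcome h \<in> iterates_top h"
  unfolding iter_outcome_def by (rule iterates_top.inter) auto

lemma iter_outcome_postfixed: "iter_outcome h \<subseteq> h (iter_outcome h)"
  using iterates_top.step[OF iter_outcome_in_iterates]
  unfolding iter_outcome_def by (rule Inter_lower)

lemma iter_outcome_greatest:
  assumes "\<And>F. C \<subseteq> F \<Longrightarrow> C \<subseteq> h F"
  shows "C \<subseteq> iter_outcome h"
proof -
  have "C \<subseteq> F" if "F \<in> iterates_top h" for F
    using that by induction (auto dest: assms)
  then show ?thesis
    unfolding iter_outcome_def by blast
qed

definition valid :: "'s game \<Rightarrow> ('w, 's) bmodel \<Rightarrow> lform \<Rightarrow> bool" where
  "valid G M a \<longleftrightarrow> (\<forall>E. sem G M a E = UNIV)"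

lemma sem_LImp: "sem G M (LImp a b) E = - sem G M a E \<union> sem G M b E"
  by (auto simp: LImp_def)

lemma valid_LImp: "valid G M (LImp a b) \<longleftrightarrow> (\<forall>E. sem G M a E \<subseteq> sem G M b E)"
  by (auto simp: valid_def sem_LImp)

lemma sem_bigAnd: "sem G M (bigAnd xs) E = (\<Inter>a\<in>set xs. sem G M a E)"
  by (induction xs) (auto simp: bigAnd_def LTrue_def)

lemma pval_sem: "pval (\<lambda>b. \<omega> \<in> sem G M b E) a \<longleftrightarrow> \<omega> \<in> sem G M a E"
  by (induction a) auto

lemma valid_ptaut: "ptaut a \<Longrightarrow> valid G M a"
  unfolding valid_def ptaut_def by (metis UNIV_eq_I pval_sem)

lemma rat_box_implies_opt:
  assumes "\<forall>i<nplayers G. opositive (\<phi> i)"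
  shows "sem G M (ratAll (nplayers G) \<phi>) E \<inter> sem G M (BoxAll (nplayers G) \<chi>) E
           \<subseteq> sem G M (OptAll (nplayers G) \<phi> \<chi>) E"
proof (clarsimp simp: ratAll_def BoxAll_def OptAll_def sem_bigAnd)
  fix \<omega> i
  assume "i < nplayers G"
    and "\<forall>j\<in>{0..<nplayers G}. oholds G j (restrG M (poss M j \<omega>)) (sbar G M \<omega>) (\<phi> j)"
    and "\<forall>j\<in>{0..<nplayers G}. poss M j \<omega> \<subseteq> sem G M \<chi> E"
  then have rational: "oholds G i (restrG M (poss M i \<omega>)) (sbar G M \<omega>) (\<phi> i)"
    and believes: "poss M i \<omega> \<subseteq> sem G M \<chi> E" by auto
  from assms \<open>i < nplayers G\<close> have "opositive (\<phi> i)" by simp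
  from oholds_mono[OF this restrG_mono[OF believes] rational]
  show "oholds G i (restrG M (sem G M \<chi> E)) (sbar G M \<omega>) (\<phi> i)" .
qed

lemma valid_nu_unfold: "valid G M (LImp (Nu a) (substX a (Nu a)))"
  using iter_outcome_postfixed[of "\<lambda>F. sem G M a F \<inter> F"]
  by (auto simp: valid_LImp sem_substX)

lemma valid_nu_induct:
  assumes "positiveX a" and "valid G M (LImp c (substX a c))"
  shows "valid G M (LImp c (Nu a))"
  unfolding valid_LImp
proof
  fix E
  have post: "sem G M c E \<subseteq> sem G M a (sem G M c E)"
    using assms(2) by (simp add: valid_LImp sem_substX)
  show "sem G M c E \<subseteq> sem G M (Nu a) E"
  proof (simp, rule iter_outcome_greatest)
    fix F
    assume "sem G M c E \<subseteq> F"
    with post sem_mono_positiveX[OF assms(1)]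
    show "sem G M c E \<subseteq> sem G M a F \<inter> F" by blast
  qed
qed

lemma prov_valid: "prov (nplayers G) \<psi> \<Longrightarrow> valid G M \<psi>"
proof (induction rule: prov.induct)
  case (taut a)
  then show ?case by (simp add: valid_ptaut)
next
  case (mp a b)
  have "sem G M a E \<subseteq> sem G M b E" for E
    using \<open>valid G M (LImp a b)\<close> by (simp add: valid_LImp)
  with \<open>valid G M a\<close> show ?case
    unfolding valid_def by blast
next
  case (ax_rat \<phi> c)
  have "sem G M (ratAll (nplayers G) \<phi>) E
          \<subseteq> sem G M (LImp (BoxAll (nplayers G) c) (OptAll (nplayers G) \<phi> c)) E" for E
    using ax_rat.hyps(1) rat_box_implies_opt[of G \<phi> M E c] by (auto simp: sem_LImp)
  then show ?case
    by (simp add: valid_LImp)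
next
  case (ax_nu a)
  show ?case by (rule valid_nu_unfold)
next
  case (rule_nu c a)
  then show ?case by (simp add: valid_nu_induct)
qed

theorem mainTheorem10:
  fixes G :: "'s game" and M :: "('w, 's) bmodel"
  assumes "belief_model G M"
  shows "(\<forall>\<psi>. prov (nplayers G) \<psi> \<longrightarrow> (\<forall>E. sem G M \<psi> E = UNIV))
       \<and> (\<forall>\<phi> \<chi> E. (\<forall>i<nplayers G. oclosed (\<phi> i) \<and> opositive (\<phi> i)) \<longrightarrow>
            sem G M (ratAll (nplayers G) \<phi>) E \<inter> sem G M (BoxAll (nplayers G) \<chi>) E
              \<subseteq> sem G M (OptAll (nplayers G) \<phi> \<chi>) E)"
  \<comment> \<open>Soundness does not need the strategy assignments to be legal.\<close>
  using prov_valid[of G _ M] rat_box_implies_opt[of G _ M]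
  unfolding valid_def by blast

end
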